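(* Let $G$ be a $k$-cop-win graph and let $H$ be a 1-point retract of $G$. Then for all $m\geq 1$, $H$ is $k$-cop-win and $\mathrm{capt}_k(H,m)\leq \mathrm{capt}_k(G,m)$.
   Context: All graphs are finite, simple, connected and reflexive (a player may stay in place). A homomorphism $f:G\to H$ maps vertices to vertices so that adjacent (or equal) vertices go to adjacent (or equal) vertices. An induced subgraph $H$ of $G$ is a retract if there is a homomorphism $f:G\to H$ with $f(x)=x$ for all $x\in V(H)$; if $H=G-u$ for some vertex $u$, $H$ is a 1-point retract. The game of $k$ cops and $m$ robbers on $G$: in round 0 the cops first choose starting vertices, then the robbers choose theirs. In each round $i\geq 1$, all $k$ cops move (each to an adjacent vertex or staying), then all $m$ robbers move likewise. Several players may occupy the same vertex. Whenever a cop and some robbers occupy the same vertex, those robbers are captured and take no further part in the game. Both sides have full information. The cops win if all robbers are captured after finitely many rounds. $G$ is $k$-cop-win if $k$ cops can always win against one robber. For a $k$-cop-win graph $G$, $\mathrm{capt}_k(G,m)$ is the index of the round in which the last robber is captured when $k$ cops play to minimize this index and $m$ robbers play to maximize it. *)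

theory Defs
  imports Main
begin

(* A finite, simple, connected, reflexive graph with vertex set V and
   symmetric edge relation E (loops at every vertex: a player may stay). *)
definition refl_graph :: "'a set \<Rightarrow> ('a \<Rightarrow> 'a \<Rightarrow> bool) \<Rightarrow> bool" where
  "refl_graph V E \<longleftrightarrow> finite V \<and> V \<noteq> {} \<and>
     (\<forall>x y. E x y \<longrightarrow> x \<in> V \<and> y \<in> V) \<and>
     (\<forall>x y. E x y \<longrightarrow> E y x) \<and>
     (\<forall>x\<in>V. E x x) \<and>
     (\<forall>x\<in>V. \<forall>y\<in>V. E\<^sup>*\<^sup>* x y)"

definition induced :: "('a \<Rightarrow> 'a \<Rightarrow> bool) \<Rightarrow> 'a set \<Rightarrow> 'a \<Rightarrow> 'a \<Rightarrow> bool" where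
  "induced E W = (\<lambda>x y. E x y \<and> x \<in> W \<and> y \<in> W)"

definition graph_hom :: "'a set \<Rightarrow> ('a \<Rightarrow> 'a \<Rightarrow> bool) \<Rightarrow> 'b set \<Rightarrow> ('b \<Rightarrow> 'b \<Rightarrow> bool) \<Rightarrow> ('a \<Rightarrow> 'b) \<Rightarrow> bool" where
  "graph_hom V E W F f \<longleftrightarrow> (\<forall>x\<in>V. f x \<in> W) \<and>
     (\<forall>x\<in>V. \<forall>y\<in>V. (x = y \<or> E x y) \<longrightarrow> (f x = f y \<or> F (f x) (f y)))"

definition is_retract :: "'a set \<Rightarrow> ('a \<Rightarrow> 'a \<Rightarrow> bool) \<Rightarrow> 'a set \<Rightarrow> bool" where
  "is_retract V E W \<longleftrightarrow> W \<subseteq> V \<and>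
     (\<exists>f. graph_hom V E W (induced E W) f \<and> (\<forall>x\<in>W. f x = x))"

definition one_point_retract :: "'a set \<Rightarrow> ('a \<Rightarrow> 'a \<Rightarrow> bool) \<Rightarrow> 'a set \<Rightarrow> bool" where
  "one_point_retract V E W \<longleftrightarrow> (\<exists>u\<in>V. W = V - {u} \<and> is_retract V E W)"

(* cops_win_in E n C R: the game is at the end of some round (after the robbers'
   move and captures), cops are at positions C (list, one entry per cop),
   the still-uncaptured robbers are at positions R (list, one entry per robber).
   Then the cops can force that all robbers are captured within n further rounds.
   In each round the cops move first (each along an edge or staying), robbers on
   a cop's vertex are captured, then all remaining robbers move, and robbers
   landing on a cop's vertex are captured. *)
fun cops_win_in :: "('a \<Rightarrow> 'a \<Rightarrow> bool) \<Rightarrow> nat \<Rightarrow> 'a list \<Rightarrow> 'a list \<Rightarrow> bool" where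
  "cops_win_in E 0 C R = (R = [])"
| "cops_win_in E (Suc n) C R =
     (R = [] \<or>
      (\<exists>C'. list_all2 E C C' \<and>
        (\<forall>R'. list_all2 E (filter (\<lambda>r. r \<notin> set C') R) R' \<longrightarrow>
               cops_win_in E n C' (filter (\<lambda>r. r \<notin> set C') R'))))"

(* k cops can capture all m robbers on G = (V,E) by round n (round 0 = placement:
   cops place first, then robbers; robbers placed on a cop are captured). *)
definition capture_by :: "'a set \<Rightarrow> ('a \<Rightarrow> 'a \<Rightarrow> bool) \<Rightarrow> nat \<Rightarrow> nat \<Rightarrow> nat \<Rightarrow> bool" where
  "capture_by V E k m n \<longleftrightarrow>
     (\<exists>C0. length C0 = k \<and> set C0 \<subseteq> V \<and>
        (\<forall>R0. length R0 = m \<and> set R0 \<subseteq> V \<longrightarrow>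
              cops_win_in E n C0 (filter (\<lambda>r. r \<notin> set C0) R0)))"

definition k_cop_win :: "'a set \<Rightarrow> ('a \<Rightarrow> 'a \<Rightarrow> bool) \<Rightarrow> nat \<Rightarrow> bool" where
  "k_cop_win V E k \<longleftrightarrow> (\<exists>n. capture_by V E k 1 n)"

definition capt :: "'a set \<Rightarrow> ('a \<Rightarrow> 'a \<Rightarrow> bool) \<Rightarrow> nat \<Rightarrow> nat \<Rightarrow> nat" where
  "capt V E k m = (LEAST n. capture_by V E k m n)"

end

theory Submission
  imports Defs "HOL-Library.Sublist"
begin

(* Let f be a retraction of G onto H. If the cops of G play against robbers that stay in H,
   the images of the cops under f move legally in H, because f is a homomorphism; and a robber
   of H that meets the image f c of a cop meets c itself, because f fixes H. So these shadow cops
   capture every robber of H no later than the cops of G would, for any number of robbers.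
   The capture times can only be compared once capt_k(G,m) is attained, i.e. once k cops that
   catch one robber also catch m of them: they repeatedly walk back to their starting position
   (within the diameter of G) and then run the one-robber strategy against one remaining robber,
   ignoring the others, so that each phase removes at least one robber. *)

abbreviation uncaptured :: "'a list \<Rightarrow> 'a list \<Rightarrow> 'a list" where
  "uncaptured C R \<equiv> filter (\<lambda>r. r \<notin> set C) R"

lemma cops_win_in_Nil: "cops_win_in E n C []"
  by (cases n) simp_all

lemma subseq_filter_weaken:
  assumes "\<forall>x\<in>set ys. P x \<longrightarrow> Q x"
  shows "subseq (filter P ys) (filter Q ys)"
proof -
  have "filter P ys = filter P (filter Q ys)"
    using assms by (induction ys) auto
  then show ?thesis
    by (metis subseq_filter_left)
qed

fun forces_within ::
  "('a \<Rightarrow> 'a \<Rightarrow> bool) \<Rightarrow> nat \<Rightarrow> ('a list \<times> 'a list) set \<Rightarrow> 'a list \<Rightarrow> 'a list \<Rightarrow> bool" where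
  "forces_within E 0 S C R = ((C, R) \<in> S)"
| "forces_within E (Suc n) S C R = ((C, R) \<in> S \<or>
     (\<exists>C'. list_all2 E C C' \<and>
        (\<forall>R'. list_all2 E (uncaptured C' R) R' \<longrightarrow> forces_within E n S C' (uncaptured C' R'))))"

lemma cops_win_in_iff_forces_within:
  "cops_win_in E n C R \<longleftrightarrow> forces_within E n {(C, R). R = []} C R"
  by (induction n arbitrary: C R) auto

lemma forces_within_if_mem: "(C, R) \<in> S \<Longrightarrow> forces_within E n S C R"
  by (cases n) auto

lemma forces_within_mono:
  "forces_within E n S C R \<Longrightarrow> n \<le> n' \<Longrightarrow> forces_within E n' S C R"
proof (induction n arbitrary: n' C R)
  case 0
  then show ?case by (simp add: forces_within_if_mem)
next
  case (Suc n)
  then obtain n'' where n': "n' = Suc n''" and "n \<le> n''"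
    by (cases n') auto
  show ?case
  proof (cases "(C, R) \<in> S")
    case True
    then show ?thesis by (rule forces_within_if_mem)
  next
    case False
    with Suc.prems(1) obtain C' where "list_all2 E C C'" and
      "\<forall>R'. list_all2 E (uncaptured C' R) R' \<longrightarrow> forces_within E n S C' (uncaptured C' R')"
      by auto
    with Suc.IH \<open>n \<le> n''\<close> show ?thesis
      unfolding n' by (simp only: forces_within.simps) blast
  qed
qed

lemma forces_within_trans:
  assumes "forces_within E a S C R"
    and "\<And>C' R'. (C', R') \<in> S \<Longrightarrow> forces_within E b T C' R'"
  shows "forces_within E (a + b) T C R"
  using assms(1)
proof (induction a arbitrary: C R)
  case 0
  then show ?case using assms(2) by simp
next
  case (Suc a)
  show ?case
  proof (cases "(C, R) \<in> S")
    case True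
    then show ?thesis
      using assms(2) forces_within_mono le_add2 by blast
  next
    case False
    with Suc.prems obtain C' where "list_all2 E C C'" and
      "\<forall>R'. list_all2 E (uncaptured C' R) R' \<longrightarrow> forces_within E a S C' (uncaptured C' R')"
      by auto
    with Suc.IH show ?thesis
      by (simp only: forces_within.simps add_Suc) blast
  qed
qed

definition positions :: "'a set \<Rightarrow> nat \<Rightarrow> nat \<Rightarrow> ('a list \<times> 'a list) set" where
  "positions V k L = {(C, R). set C \<subseteq> V \<and> length C = k \<and> set R \<subseteq> V \<and>
     (\<forall>r\<in>set R. r \<notin> set C) \<and> length R \<le> L}"

lemma forces_within_positions_if_le:
  "(C, R) \<in> positions V k (Suc L) \<Longrightarrow> length R \<le> L \<Longrightarrow> forces_within E n (positions V k L) C R"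
  by (rule forces_within_if_mem) (simp add: positions_def)

context
  fixes V :: "'a set" and E :: "'a \<Rightarrow> 'a \<Rightarrow> bool"
  assumes G: "refl_graph V E"
begin

lemma edge_in_vertices: "E x y \<Longrightarrow> x \<in> V \<and> y \<in> V"
  using G unfolding refl_graph_def by blast

lemma edge_refl: "x \<in> V \<Longrightarrow> E x x"
  using G unfolding refl_graph_def by blast

lemma list_all2_set_subset: "list_all2 E xs ys \<Longrightarrow> set xs \<subseteq> V \<and> set ys \<subseteq> V"
  by (induction rule: list_all2_induct) (auto dest: edge_in_vertices)

subsection \<open>Retracts\<close>

lemma list_all2_retraction:
  assumes hom: "graph_hom V E W (induced E W) f" and "W \<subseteq> V"
    and "list_all2 E C C'"
  shows "list_all2 (induced E W) (map f C) (map f C')"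
  unfolding list_all2_map1 list_all2_map2
proof (rule list_all2_mono[OF \<open>list_all2 E C C'\<close>])
  fix c d assume "E c d"
  then have "c \<in> V" "d \<in> V" using edge_in_vertices by auto
  then have "f c = f d \<or> induced E W (f c) (f d)" "f c \<in> W" "f d \<in> W"
    using hom \<open>E c d\<close> unfolding graph_hom_def by blast+
  moreover have "E (f c) (f c)"
    using edge_refl \<open>W \<subseteq> V\<close> \<open>f c \<in> W\<close> by blast
  ultimately show "induced E W (f c) (f d)"
    unfolding induced_def by metis
qed

text \<open>Robbers of G that have no counterpart in H stay where they are.\<close>

lemma lift_robber_moves:
  assumes "W \<subseteq> V"
  shows "subseq A B \<Longrightarrow> list_all2 (induced E W) A A' \<Longrightarrow> set B \<subseteq> W \<Longrightarrow>
    \<exists>B'. list_all2 E B B' \<and> subseq A' B' \<and> set B' \<subseteq> W"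
proof (induction arbitrary: A' rule: list_emb.induct)
  case (list_emb_Nil ys)
  then have "list_all2 E ys ys"
    using assms by (auto intro: list.rel_refl_strong edge_refl)
  with list_emb_Nil show ?case by auto
next
  case (list_emb_Cons xs ys y)
  then have "set ys \<subseteq> W" by simp
  with list_emb_Cons.IH list_emb_Cons.prems(1)
  obtain B' where "list_all2 E ys B'" "subseq A' B'" "set B' \<subseteq> W"
    by blast
  moreover have "E y y"
    using list_emb_Cons.prems(2) assms edge_refl by auto
  ultimately show ?case
    using list_emb_Cons.prems(2) by (intro exI[of _ "y # B'"]) auto
next
  case (list_emb_Cons2 x y xs ys)
  then obtain x' xs' where "A' = x' # xs'" "E x x'" "x' \<in> W"
    and "list_all2 (induced E W) xs xs'"
    by (cases A') (auto simp: induced_def)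
  moreover have "set ys \<subseteq> W"
    using list_emb_Cons2.prems(2) by simp
  ultimately obtain B' where "list_all2 E ys B'" "subseq xs' B'" "set B' \<subseteq> W"
    using list_emb_Cons2.IH by blast
  with \<open>A' = x' # xs'\<close> \<open>E x x'\<close> \<open>x' \<in> W\<close> list_emb_Cons2.hyps(1) show ?case
    by (intro exI[of _ "x' # B'"]) auto
qed

lemma subseq_uncaptured_retraction:
  assumes "subseq RH RG" "set RG \<subseteq> W" "\<forall>x\<in>W. f x = x"
  shows "subseq (uncaptured (map f C) RH) (uncaptured C RG)"
proof -
  have "\<forall>x\<in>set RG. x \<notin> set (map f C) \<longrightarrow> x \<notin> set C"
    using assms(2,3) by force
  then have "subseq (uncaptured (map f C) RG) (uncaptured C RG)"
    by (rule subseq_filter_weaken)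
  moreover have "subseq (uncaptured (map f C) RH) (uncaptured (map f C) RG)"
    using assms(1) by (rule subseq_filter)
  ultimately show ?thesis
    using subseq_order.order_trans by blast
qed

lemma cops_win_in_retract:
  assumes "W \<subseteq> V" and hom: "graph_hom V E W (induced E W) f" and f_id: "\<forall>x\<in>W. f x = x"
  shows "cops_win_in E n C RG \<Longrightarrow> subseq RH RG \<Longrightarrow> set RG \<subseteq> W \<Longrightarrow>
    cops_win_in (induced E W) n (map f C) RH"
proof (induction n arbitrary: C RG RH)
  case 0
  then show ?case by simp
next
  case (Suc n)
  show ?case
  proof (cases "RG = []")
    case True
    with Suc.prems(2) show ?thesis by simp
  next
    case False
    with Suc.prems(1) obtain C' where "list_all2 E C C'" and
      win: "\<forall>R'. list_all2 E (uncaptured C' RG) R' \<longrightarrow> cops_win_in E n C' (uncaptured C' R')"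
      by (simp only: cops_win_in.simps) blast
    have "cops_win_in (induced E W) n (map f C') (uncaptured (map f C') RH')"
      if moves: "list_all2 (induced E W) (uncaptured (map f C') RH) RH'" for RH'
    proof -
      have "subseq (uncaptured (map f C') RH) (uncaptured C' RG)"
        using Suc.prems(2,3) f_id by (rule subseq_uncaptured_retraction)
      moreover have "set (uncaptured C' RG) \<subseteq> W"
        using Suc.prems(3) by auto
      ultimately obtain RG' where "list_all2 E (uncaptured C' RG) RG'" "subseq RH' RG'" "set RG' \<subseteq> W"
        using lift_robber_moves[OF \<open>W \<subseteq> V\<close> _ moves] by meson
      show ?thesis
      proof (rule Suc.IH)
        show "cops_win_in E n C' (uncaptured C' RG')"
          using win \<open>list_all2 E (uncaptured C' RG) RG'\<close> by blast
        show "subseq (uncaptured (map f C') RH') (uncaptured C' RG')"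
          using \<open>subseq RH' RG'\<close> \<open>set RG' \<subseteq> W\<close> f_id by (rule subseq_uncaptured_retraction)
        show "set (uncaptured C' RG') \<subseteq> W"
          using \<open>set RG' \<subseteq> W\<close> by auto
      qed
    qed
    moreover have "list_all2 (induced E W) (map f C) (map f C')"
      using list_all2_retraction[OF hom \<open>W \<subseteq> V\<close> \<open>list_all2 E C C'\<close>] .
    ultimately show ?thesis
      by (simp only: cops_win_in.simps) blast
  qed
qed

lemma capture_by_retract:
  assumes "is_retract V E W" and "capture_by V E k m n"
  shows "capture_by W (induced E W) k m n"
proof -
  obtain f where "W \<subseteq> V" and hom: "graph_hom V E W (induced E W) f" and f_id: "\<forall>x\<in>W. f x = x"
    using assms(1) unfolding is_retract_def by blast
  from \<open>capture_by V E k m n\<close> obtain C0 where "length C0 = k" "set C0 \<subseteq> V" and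
    win: "\<forall>R0. length R0 = m \<and> set R0 \<subseteq> V \<longrightarrow> cops_win_in E n C0 (uncaptured C0 R0)"
    unfolding capture_by_def by blast
  have "set (map f C0) \<subseteq> W"
    using hom \<open>set C0 \<subseteq> V\<close> unfolding graph_hom_def by auto
  moreover have "cops_win_in (induced E W) n (map f C0) (uncaptured (map f C0) R0)"
    if "length R0 = m" "set R0 \<subseteq> W" for R0
  proof (rule cops_win_in_retract[OF \<open>W \<subseteq> V\<close> hom f_id])
    show "cops_win_in E n C0 (uncaptured C0 R0)"
      using win that \<open>W \<subseteq> V\<close> by auto
    show "subseq (uncaptured (map f C0) R0) (uncaptured C0 R0)"
      using that(2) f_id by (rule subseq_uncaptured_retraction[OF subseq_order.order_refl])
  qed (use that in auto)
  ultimately show ?thesis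
    unfolding capture_by_def using \<open>length C0 = k\<close> by (intro exI[of _ "map f C0"]) auto
qed

lemma capt_retract_le:
  assumes "is_retract V E W" and "\<exists>n. capture_by V E k m n"
  shows "capt W (induced E W) k m \<le> capt V E k m"
proof -
  have "capture_by V E k m (capt V E k m)"
    unfolding capt_def using assms(2) by (rule LeastI_ex)
  then have "capture_by W (induced E W) k m (capt V E k m)"
    by (rule capture_by_retract[OF assms(1)])
  then show ?thesis
    unfolding capt_def by (rule Least_le)
qed

subsection \<open>From one robber to many\<close>

lemma relpowp_refl_mono: "(E ^^ n) x y \<Longrightarrow> n \<le> m \<Longrightarrow> y \<in> V \<Longrightarrow> (E ^^ m) x y"
proof (induction m)
  case 0
  then show ?case by simp
next
  case (Suc m)
  show ?case
  proof (cases "n = Suc m")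
    case False
    with Suc have "(E ^^ m) x y" by simp
    then show ?thesis
      using edge_refl[OF \<open>y \<in> V\<close>] by (rule relpowp_Suc_I[where P = E])
  qed (use Suc in simp)
qed

lemma ex_diameter: "\<exists>D. \<forall>x\<in>V. \<forall>y\<in>V. (E ^^ D) x y"
proof -
  have "\<exists>n. (E ^^ n) x y" if "x \<in> V" "y \<in> V" for x y
    using G that unfolding refl_graph_def by (blast intro: rtranclp_imp_relpowp)
  then obtain dist where dist: "\<And>x y. x \<in> V \<Longrightarrow> y \<in> V \<Longrightarrow> (E ^^ dist x y) x y"
    by metis
  define D where "D = Max ((\<lambda>(x, y). dist x y) ` (V \<times> V))"
  have "finite V"
    using G unfolding refl_graph_def by blast
  then have "dist x y \<le> D" if "x \<in> V" "y \<in> V" for x y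
    unfolding D_def using that by (intro Max_ge) auto
  then show ?thesis
    using dist relpowp_refl_mono by blast
qed

lemma positions_move:
  assumes "(C, R) \<in> positions V k L" "list_all2 E C C'" "list_all2 E (uncaptured C' R) R'"
  shows "(C', uncaptured C' R') \<in> positions V k L"
proof -
  have "length (uncaptured C' R') \<le> length R'"
    by (rule length_filter_le)
  also have "\<dots> = length (uncaptured C' R)"
    using assms(3) by (rule list_all2_lengthD[symmetric])
  also have "\<dots> \<le> length R"
    by (rule length_filter_le)
  also have "\<dots> \<le> L"
    using assms(1) by (simp add: positions_def)
  finally have "length (uncaptured C' R') \<le> L" .
  moreover have "length C' = k"
    using assms(1) list_all2_lengthD[OF assms(2)] by (simp add: positions_def)
  moreover have "set C' \<subseteq> V" "set R' \<subseteq> V"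
    using list_all2_set_subset[OF assms(2)] list_all2_set_subset[OF assms(3)] by simp_all
  ultimately show ?thesis
    by (auto simp: positions_def)
qed

lemma forces_within_return:
  "list_all2 (E ^^ d) C C0 \<Longrightarrow> (C, R) \<in> positions V k L \<Longrightarrow>
   forces_within E d (positions V k L \<inter> {C0} \<times> UNIV) C R"
proof (induction d arbitrary: C R)
  case 0
  then show ?case by (simp add: list.rel_eq)
next
  case (Suc d)
  have "list_all2 (E OO (E ^^ d)) C C0"
    using Suc.prems(1) by (simp only: relpowp_Suc_left)
  then obtain C1 where "list_all2 E C C1" "list_all2 (E ^^ d) C1 C0"
    by (auto simp: list.rel_compp)
  with Suc positions_move show ?case
    by (simp only: forces_within.simps) blast
qed

lemma forces_within_chase:
  "cops_win_in E j C [x] \<Longrightarrow> (C, x # rest) \<in> positions V k (Suc L) \<Longrightarrow>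
   forces_within E j (positions V k L) C (x # rest)"
proof (induction j arbitrary: C x rest)
  case 0
  then show ?case by simp
next
  case (Suc j)
  have "x \<notin> set C"
    using Suc.prems(2) unfolding positions_def by simp
  with Suc.prems(1) obtain C' where "list_all2 E C C'" and
    win: "\<forall>R'. list_all2 E (uncaptured C' [x]) R' \<longrightarrow> cops_win_in E j C' (uncaptured C' R')"
    by (simp only: cops_win_in.simps) blast
  have "forces_within E j (positions V k L) C' (uncaptured C' R')"
    if moves: "list_all2 E (uncaptured C' (x # rest)) R'" for R'
  proof -
    have pos: "(C', uncaptured C' R') \<in> positions V k (Suc L)"
      using Suc.prems(2) \<open>list_all2 E C C'\<close> moves by (rule positions_move)
    have "length rest \<le> L"
      using Suc.prems(2) unfolding positions_def by simp
    show ?thesis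
    proof (cases "x \<in> set C'")
      case True
      then have "length (uncaptured C' R') \<le> L"
        using list_all2_lengthD[OF moves] \<open>length rest \<le> L\<close>
        by (metis filter.simps(2) le_trans length_filter_le)
      with pos show ?thesis
        by (rule forces_within_positions_if_le)
    next
      case False
      with moves obtain x' rest' where "R' = x' # rest'" "E x x'"
        and "list_all2 E (uncaptured C' rest) rest'"
        by (auto simp: list_all2_Cons1)
      then have "length rest' \<le> L"
        using \<open>length rest \<le> L\<close> by (metis list_all2_lengthD le_trans length_filter_le)
      show ?thesis
      proof (cases "x' \<in> set C'")
        case True
        then have "length (uncaptured C' R') \<le> L"
          using \<open>R' = x' # rest'\<close> \<open>length rest' \<le> L\<close> by (auto intro: le_trans[OF length_filter_le])
        with pos show ?thesis
          by (rule forces_within_positions_if_le)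
      next
        case False
        then have "cops_win_in E j C' [x']"
          using win \<open>E x x'\<close> \<open>x \<notin> set C'\<close> by auto
        with pos False show ?thesis
          using Suc.IH \<open>R' = x' # rest'\<close> by simp
      qed
    qed
  qed
  with \<open>list_all2 E C C'\<close> show ?case
    by (simp only: forces_within.simps) blast
qed

text \<open>One phase: walk back to C0 in D rounds, then play the one-robber strategy against
  the first remaining robber; robbers captured on the way only help.\<close>

lemma forces_within_phase:
  assumes diam: "\<forall>x\<in>V. \<forall>y\<in>V. (E ^^ D) x y"
    and "set C0 \<subseteq> V" "length C0 = k"
    and win: "\<forall>x\<in>V - set C0. cops_win_in E N C0 [x]"
    and "(C, R) \<in> positions V k (Suc L)"
  shows "forces_within E (D + N) (positions V k L) C R"
proof (rule forces_within_trans)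
  have "set C \<subseteq> V" and len: "length C = length C0"
    using assms(3,5) unfolding positions_def by auto
  from len have "list_all2 (E ^^ D) C C0"
  proof (rule list_all2_all_nthI)
    fix i assume "i < length C"
    then have "C ! i \<in> V" "C0 ! i \<in> V"
      using \<open>set C \<subseteq> V\<close> \<open>set C0 \<subseteq> V\<close> len nth_mem by auto
    then show "(E ^^ D) (C ! i) (C0 ! i)"
      using diam by blast
  qed
  then show "forces_within E D (positions V k (Suc L) \<inter> {C0} \<times> UNIV) C R"
    using assms(5) by (rule forces_within_return)
next
  fix C' R' assume "(C', R') \<in> positions V k (Suc L) \<inter> {C0} \<times> UNIV"
  then have pos: "(C0, R') \<in> positions V k (Suc L)" and "C' = C0" by auto
  show "forces_within E N (positions V k L) C' R'"
  proof (cases R')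
    case Nil
    then show ?thesis
      using forces_within_positions_if_le[OF pos] \<open>C' = C0\<close> by simp
  next
    case (Cons x rest)
    with pos win have "cops_win_in E N C0 [x]"
      unfolding positions_def by auto
    then show ?thesis
      using forces_within_chase pos Cons \<open>C' = C0\<close> by blast
  qed
qed

lemma cops_win_in_positions:
  assumes "\<forall>x\<in>V. \<forall>y\<in>V. (E ^^ D) x y"
    and "set C0 \<subseteq> V" "length C0 = k"
    and "\<forall>x\<in>V - set C0. cops_win_in E N C0 [x]"
  shows "(C, R) \<in> positions V k L \<Longrightarrow> cops_win_in E (L * (D + N)) C R"
proof (induction L arbitrary: C R)
  case 0
  then show ?case
    unfolding positions_def by (simp add: cops_win_in_Nil)
next
  case (Suc L)
  have "forces_within E ((D + N) + L * (D + N)) {(C, R). R = []} C R"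
    using forces_within_phase[OF assms Suc.prems]
    by (rule forces_within_trans) (metis Suc.IH cops_win_in_iff_forces_within)
  then show ?case
    by (simp add: cops_win_in_iff_forces_within add.commute)
qed

lemma capture_by_if_k_cop_win:
  assumes "k_cop_win V E k"
  shows "\<exists>n. capture_by V E k m n"
proof -
  obtain N C0 where "length C0 = k" "set C0 \<subseteq> V" and
    win1: "\<forall>R0. length R0 = 1 \<and> set R0 \<subseteq> V \<longrightarrow> cops_win_in E N C0 (uncaptured C0 R0)"
    using assms unfolding k_cop_win_def capture_by_def by blast
  have "\<forall>x\<in>V - set C0. cops_win_in E N C0 [x]"
  proof
    fix x assume "x \<in> V - set C0"
    then show "cops_win_in E N C0 [x]"
      using win1[rule_format, of "[x]"] by simp
  qed
  moreover obtain D where "\<forall>x\<in>V. \<forall>y\<in>V. (E ^^ D) x y"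
    using ex_diameter by blast
  moreover have "(C0, uncaptured C0 R0) \<in> positions V k m"
    if "length R0 = m" "set R0 \<subseteq> V" for R0
    using \<open>set C0 \<subseteq> V\<close> \<open>length C0 = k\<close> that
    unfolding positions_def by (auto intro: le_trans[OF length_filter_le])
  ultimately have "cops_win_in E (m * (D + N)) C0 (uncaptured C0 R0)"
    if "length R0 = m" "set R0 \<subseteq> V" for R0
    using cops_win_in_positions \<open>set C0 \<subseteq> V\<close> \<open>length C0 = k\<close> that by blast
  then have "capture_by V E k m (m * (D + N))"
    unfolding capture_by_def using \<open>length C0 = k\<close> \<open>set C0 \<subseteq> V\<close> by blast
  then show ?thesis ..
qed

end

theorem mainTheorem12:
  fixes V :: "'a set" and E :: "'a \<Rightarrow> 'a \<Rightarrow> bool" and W :: "'a set" and k :: nat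
  assumes "refl_graph V E"
    and "k_cop_win V E k"
    and "one_point_retract V E W"
  shows "k_cop_win W (induced E W) k \<and>
         (\<forall>m\<ge>1. capt W (induced E W) k m \<le> capt V E k m)"
proof -
  have retract: "is_retract V E W"
    using assms(3) unfolding one_point_retract_def by blast
  have "k_cop_win W (induced E W) k"
    using capture_by_retract[OF assms(1) retract] assms(2)
    unfolding k_cop_win_def by blast
  moreover have "capt W (induced E W) k m \<le> capt V E k m" for m
    using capt_retract_le[OF assms(1) retract capture_by_if_k_cop_win[OF assms(1,2)]] .
  ultimately show ?thesis by blast
qed

end
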